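(* For every integer $n\ge 1$, the cubature formula $$\frac12\int_{\Omega_H}f(\mathbf t)\,d\mathbf t=\frac1{4n^3}\sum_{\mathbf j\in\mathbb H_n^*}c^{(n)}_{\mathbf j}f(\tfrac{\mathbf j}{4n})$$ is exact for all $f\in\mathcal T_{2n-1}$.
   Context: Let $\mathbb R^4_H=\{\mathbf t\in\mathbb R^4: t_1+t_2+t_3+t_4=0\}$ with its 3-dimensional Lebesgue measure $d\mathbf t$, $\mathbb Z^4_H=\mathbb Z^4\cap\mathbb R^4_H$, and $\Omega_H=\{\mathbf t\in\mathbb R^4_H: -1<t_i-t_j\le 1,\ 1\le i<j\le4\}$ (volume $2$). Let $\mathbb H=\{\mathbf k\in\mathbb Z^4_H: k_1\equiv k_2\equiv k_3\equiv k_4\pmod 4\}$, $\phi_{\mathbf k}(\mathbf t)=e^{\frac{\pi i}{2}\mathbf k\cdot\mathbf t}$, $\mathbb H_m^*=\{\mathbf k\in\mathbb H: -4m\le k_i-k_j\le 4m,\ 1\le i<j\le4\}$ and $\mathcal T_m=\operatorname{span}\{\phi_{\mathbf k}:\mathbf k\in\mathbb H_m^*\}$. For $\mathbf k\in\mathbb H_n^*$ define $c^{(n)}_{\mathbf k}=1$ if $\max_ik_i-\min_ik_i<4n$, and otherwise $c^{(n)}_{\mathbf k}=1/\binom{p+q}{p}$, where $p$ (resp. $q$) is the number of coordinates of $\mathbf k$ equal to $\max_i k_i$ (resp. $\min_ik_i$). *)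

theory Defs
  imports "HOL-Analysis.Analysis"
begin

definition hdot :: "int^4 \<Rightarrow> real^4 \<Rightarrow> real" where
  "hdot k t = (\<Sum>i\<in>UNIV. real_of_int (k$i) * t$i)"

definition phi :: "int^4 \<Rightarrow> real^4 \<Rightarrow> complex" where
  "phi k t = exp (\<i> * complex_of_real (pi / 2 * hdot k t))"

definition OmegaH :: "(real^4) set" where
  "OmegaH = {t. (\<Sum>i\<in>UNIV. t$i) = 0 \<and>
               (\<forall>i j. i < j \<longrightarrow> -1 < t$i - t$j \<and> t$i - t$j \<le> 1)}"

definition HH :: "(int^4) set" where
  "HH = {k. (\<Sum>i\<in>UNIV. k$i) = 0 \<and> (\<forall>i j. k$i mod 4 = k$j mod 4)}"

definition Hstar :: "nat \<Rightarrow> (int^4) set" where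
  "Hstar m = {k \<in> HH. \<forall>i j. i < j \<longrightarrow> - 4 * int m \<le> k$i - k$j \<and> k$i - k$j \<le> 4 * int m}"

definition Tm :: "nat \<Rightarrow> (real^4 \<Rightarrow> complex) set" where
  "Tm m = {f. \<exists>a :: int^4 \<Rightarrow> complex. f = (\<lambda>t. \<Sum>k\<in>Hstar m. a k * phi k t)}"

definition cw :: "nat \<Rightarrow> int^4 \<Rightarrow> real" where
  "cw n k = (let M = Max (range (\<lambda>i. k$i)); m = Min (range (\<lambda>i. k$i));
                 p = card {i. k$i = M}; q = card {i. k$i = m}
             in if M - m < 4 * int n then 1 else 1 / real ((p + q) choose p))"

definition liftH :: "real^3 \<Rightarrow> real^4" where
  "liftH x = vector [x$1, x$2, x$3, -(x$1 + x$2 + x$3)]"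

(* integral over Omega_H w.r.t. the 3-dimensional Lebesgue (induced Euclidean) measure
   on R^4_H; the Jacobian of liftH is sqrt 4 = 2 (so that vol Omega_H = 2). *)
definition intH :: "(real^4 \<Rightarrow> complex) \<Rightarrow> complex" where
  "intH f = 2 * integral {x. liftH x \<in> OmegaH} (\<lambda>x. f (liftH x))"

definition scaleH :: "nat \<Rightarrow> int^4 \<Rightarrow> real^4" where
  "scaleH n j = (\<chi> i. real_of_int (j$i) / (4 * real n))"

end

theory Submission
  imports Defs
begin

text \<open>
  Both sides are linear in \<open>f\<close>, so it suffices to take \<open>f = \<phi>\<^sub>k\<close> with \<open>k \<in> H*\<^sub>2\<^sub>n\<^sub>-\<^sub>1\<close>;
  both sides are then \<open>1\<close> for \<open>k = 0\<close> and \<open>0\<close> otherwise.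

  Discrete side: \<open>\<phi>\<^sub>k(j/4n)\<close> only depends on \<open>j\<close> modulo \<open>4n\<close>.  Inside \<open>H*\<^sub>n\<close>, the class of
  \<open>j\<close> modulo \<open>4n\<close> consists of the vectors obtained by moving equally many maximal
  coordinates of \<open>j\<close> down by \<open>4n\<close> and minimal ones up by \<open>4n\<close>; when \<open>max j - min j = 4n\<close>
  there are \<open>C(p+q, p)\<close> of them (Vandermonde), otherwise only \<open>j\<close> itself.  So the weights
  \<open>c\<^sub>j\<close> sum to \<open>1\<close> over every class, and the weighted sum becomes a sum over a complete
  residue system of \<open>H\<close> modulo \<open>4n\<close>.  That sum factors into three geometric sums and
  vanishes unless \<open>k \<equiv> 0 (mod 4n)\<close>, which for \<open>k \<in> H*\<^sub>2\<^sub>n\<^sub>-\<^sub>1\<close> forces \<open>k = 0\<close>.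

  Continuous side: in the coordinates \<open>t\<^sub>1, t\<^sub>2, t\<^sub>3\<close> the closure of \<open>\<Omega>\<^sub>H\<close> is the union of
  four images of the unit cube under linear maps of determinant \<open>1/4\<close>, one for each
  coordinate that may be minimal, overlapping in null sets.  On each of them \<open>\<phi>\<^sub>k\<close>
  factors, and the integral becomes \<open>(1/4) \<Sum>\<^sub>m \<Prod>\<^sub>i\<^sub>\<noteq>\<^sub>m E(\<pi> k\<^sub>i / 2)\<close> with
  \<open>E(a) = \<integral>\<^sub>0\<^sup>1 exp(\<i> a t) dt\<close>.  Since the \<open>k\<^sub>i\<close> are congruent modulo 4, either
  \<open>E(\<pi> k\<^sub>i / 2) = 0\<close> for all \<open>k\<^sub>i \<noteq> 0\<close>, or \<open>E(\<pi> k\<^sub>i / 2) = B / k\<^sub>i\<close> for one \<open>B\<close>, and the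
  sum is a multiple of \<open>k\<^sub>1 + k\<^sub>2 + k\<^sub>3 + k\<^sub>4 = 0\<close>.
\<close>

section \<open>Integer vectors\<close>

lemma vector_4 [simp]:
  "(vector [a,b,c,d] :: ('a::zero)^4) $ 1 = a"
  "(vector [a,b,c,d] :: ('a::zero)^4) $ 2 = b"
  "(vector [a,b,c,d] :: ('a::zero)^4) $ 3 = c"
  "(vector [a,b,c,d] :: ('a::zero)^4) $ 4 = d"
  unfolding vector_def by simp_all

definition vmax :: "'a::linorder^'n \<Rightarrow> 'a" where
  "vmax x = Max (range (\<lambda>i. x$i))"

definition vmin :: "'a::linorder^'n \<Rightarrow> 'a" where
  "vmin x = Min (range (\<lambda>i. x$i))"

lemma vmax_ge: "x$i \<le> vmax x"
  unfolding vmax_def by (rule Max_ge) auto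

lemma vmin_le: "vmin x \<le> x$i"
  unfolding vmin_def by (rule Min_le) auto

lemma vmax_attained: "\<exists>i. x$i = vmax x"
proof -
  have "Max (range (\<lambda>i. x$i)) \<in> range (\<lambda>i. x$i)" by (rule Max_in) auto
  thus ?thesis unfolding vmax_def by (metis imageE)
qed

lemma vmin_attained: "\<exists>i. x$i = vmin x"
proof -
  have "Min (range (\<lambda>i. x$i)) \<in> range (\<lambda>i. x$i)" by (rule Min_in) auto
  thus ?thesis unfolding vmin_def by (metis imageE)
qed

lemma vmax_eqI: "(\<And>i. x$i \<le> M) \<Longrightarrow> x$i0 = M \<Longrightarrow> vmax x = M"
  by (metis antisym vmax_attained vmax_ge)

lemma vmin_eqI: "(\<And>i. M \<le> x$i) \<Longrightarrow> x$i0 = M \<Longrightarrow> vmin x = M"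
  by (metis antisym vmin_attained vmin_le)

definition max_coords :: "'a::linorder^'n \<Rightarrow> 'n set" where
  "max_coords x = {i. x$i = vmax x}"

definition min_coords :: "'a::linorder^'n \<Rightarrow> 'n set" where
  "min_coords x = {i. x$i = vmin x}"

lemma max_coords_min_coords_disjoint: "vmin x < vmax x \<Longrightarrow> max_coords x \<inter> min_coords x = {}"
  by (auto simp: max_coords_def min_coords_def)

lemma cw_eq: "cw n j = (if vmax j - vmin j < 4 * int n then 1
   else 1 / real ((card (max_coords j) + card (min_coords j)) choose card (max_coords j)))"
  unfolding cw_def Let_def vmax_def vmin_def max_coords_def min_coords_def by simp

lemma HH_iff: "k \<in> HH \<longleftrightarrow> k$1 + k$2 + k$3 + k$4 = 0 \<and> (\<forall>i. k$i mod 4 = k$1 mod 4)"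
proof
  assume "k \<in> HH"
  thus "k$1 + k$2 + k$3 + k$4 = 0 \<and> (\<forall>i. k$i mod 4 = k$1 mod 4)"
    unfolding HH_def sum_4 by auto
next
  assume a: "k$1 + k$2 + k$3 + k$4 = 0 \<and> (\<forall>i. k$i mod 4 = k$1 mod 4)"
  hence "k$i mod 4 = k$j mod 4" for i j by (metis (full_types))
  thus "k \<in> HH" using a unfolding HH_def sum_4 by auto
qed

lemma HH_dvd_diff: "k \<in> HH \<Longrightarrow> 4 dvd (k$i - k$l)"
  unfolding HH_def by (simp add: mod_eq_dvd_iff)

lemma Hstar_iff: "k \<in> Hstar m \<longleftrightarrow> k \<in> HH \<and> (\<forall>i l. \<bar>k$i - k$l\<bar> \<le> 4 * int m)"
proof -
  have "(\<forall>i l. i < l \<longrightarrow> - 4 * int m \<le> k$i - k$l \<and> k$i - k$l \<le> 4 * int m) \<longleftrightarrow>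
        (\<forall>i l. \<bar>k$i - k$l\<bar> \<le> 4 * int m)" (is "?less \<longleftrightarrow> ?abs")
  proof
    assume less: ?less
    show ?abs
    proof (intro allI)
      fix i l :: 4
      show "\<bar>k$i - k$l\<bar> \<le> 4 * int m"
        using less[rule_format, of i l] less[rule_format, of l i]
        by (cases i l rule: linorder_cases) auto
    qed
  next
    assume abs: ?abs
    show ?less
    proof (intro allI impI)
      fix i l :: 4
      show "- 4 * int m \<le> k$i - k$l \<and> k$i - k$l \<le> 4 * int m"
        using abs[rule_format, of i l] by arith
    qed
  qed
  thus ?thesis unfolding Hstar_def by blast
qed

lemma Hstar_iff_range: "k \<in> Hstar m \<longleftrightarrow> k \<in> HH \<and> vmax k - vmin k \<le> 4 * int m"
proof -
  have "(\<forall>i l. \<bar>k$i - k$l\<bar> \<le> 4 * int m) \<longleftrightarrow> vmax k - vmin k \<le> 4 * int m"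
  proof
    assume "\<forall>i l. \<bar>k$i - k$l\<bar> \<le> 4 * int m"
    moreover obtain i l where "k$i = vmax k" "k$l = vmin k" using vmax_attained vmin_attained by metis
    ultimately have "\<bar>vmax k - vmin k\<bar> \<le> 4 * int m" by metis
    thus "vmax k - vmin k \<le> 4 * int m" by simp
  next
    assume "vmax k - vmin k \<le> 4 * int m"
    thus "\<forall>i l. \<bar>k$i - k$l\<bar> \<le> 4 * int m"
      using vmax_ge[of k] vmin_le[of k] by (smt (verit))
  qed
  thus ?thesis unfolding Hstar_iff by blast
qed

lemma HstarD:
  assumes "j \<in> Hstar n"
  shows "j \<in> HH" "j$1 + j$2 + j$3 + j$4 = 0" "\<And>i. j$i mod 4 = j$1 mod 4"
    "\<And>i l. \<bar>j$i - j$l\<bar> \<le> 4 * int n"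
  using assms by (auto simp: Hstar_iff HH_iff)

lemma finite_Hstar: "finite (Hstar m)"
proof -
  have "Hstar m \<subseteq> (\<lambda>f. \<chi> i. f i) ` PiE UNIV (\<lambda>_. {-4 * int m..4 * int m})"
  proof
    fix k assume k: "k \<in> Hstar m"
    have "k$i \<in> {-4 * int m..4 * int m}" for i
      using HstarD(2)[OF k] HstarD(4)[OF k, of i 1] HstarD(4)[OF k, of i 2]
        HstarD(4)[OF k, of i 3] HstarD(4)[OF k, of i 4] by auto
    hence "(\<lambda>i. k$i) \<in> PiE UNIV (\<lambda>_. {-4 * int m..4 * int m})" by auto
    thus "k \<in> (\<lambda>f. \<chi> i. f i) ` PiE UNIV (\<lambda>_. {-4 * int m..4 * int m})"
      by (intro image_eqI[where x="\<lambda>i. k$i"]) auto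
  qed
  moreover have "finite (PiE (UNIV::4 set) (\<lambda>_. {-4 * int m..4 * int m}))"
    by (intro finite_PiE) auto
  ultimately show ?thesis using finite_subset by blast
qed

section \<open>The weights sum to one over each class modulo 4n\<close>

lemma card_equal_card_subset_pairs:
  assumes fX: "finite X" and fY: "finite Y"
  shows "card {(A, B). A \<subseteq> X \<and> B \<subseteq> Y \<and> card A = card B} = (card X + card Y) choose card X"
proof -
  let ?S = "\<lambda>a. {A. A \<subseteq> X \<and> card A = a} \<times> {B. B \<subseteq> Y \<and> card B = a}"
  have eq: "{(A, B). A \<subseteq> X \<and> B \<subseteq> Y \<and> card A = card B} = (\<Union>a\<le>card Y. ?S a)"
    using fY by (auto intro: card_mono)
  have fin: "finite (?S a)" for a
    using fX fY by (auto intro: finite_subset[of _ "Pow X"] finite_subset[of _ "Pow Y"])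
  have "card (\<Union>a\<le>card Y. ?S a) = (\<Sum>a\<le>card Y. card (?S a))"
    by (rule card_UN_disjoint) (use fin in auto)
  also have "\<dots> = (\<Sum>a\<le>card Y. (card X choose a) * (card Y choose (card Y - a)))"
  proof (rule sum.cong[OF refl])
    fix a assume "a \<in> {..card Y}"
    thus "card (?S a) = (card X choose a) * (card Y choose (card Y - a))"
      by (simp add: card_cartesian_product n_subsets fX fY binomial_symmetric[of a "card Y"])
  qed
  also have "\<dots> = (card X + card Y) choose card Y" by (rule vandermonde)
  also have "\<dots> = (card X + card Y) choose card X"
    by (metis add_diff_cancel_right' binomial_symmetric le_add2)
  finally show ?thesis using eq by simp
qed

definition cong_vec :: "nat \<Rightarrow> int^4 \<Rightarrow> int^4 \<Rightarrow> bool" where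
  "cong_vec n j j' \<longleftrightarrow> (\<forall>i. (4 * int n) dvd (j'$i - j$i))"

lemma cong_vec_sym: "cong_vec n j j' \<Longrightarrow> cong_vec n j' j"
  unfolding cong_vec_def by (simp add: dvd_diff_commute)

lemma cong_vec_trans: "cong_vec n j j' \<Longrightarrow> cong_vec n j' j'' \<Longrightarrow> cong_vec n j j''"
  unfolding cong_vec_def
proof (intro allI)
  fix i assume "\<forall>i. 4 * int n dvd j'$i - j$i" "\<forall>i. 4 * int n dvd j''$i - j'$i"
  hence "4 * int n dvd (j'$i - j$i) + (j''$i - j'$i)" by (intro dvd_add) auto
  thus "4 * int n dvd j''$i - j$i" by simp
qed

definition cong_class :: "nat \<Rightarrow> int^4 \<Rightarrow> (int^4) set" where
  "cong_class n j = {j' \<in> Hstar n. cong_vec n j j'}"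

definition shift_vec :: "nat \<Rightarrow> 4 set \<Rightarrow> 4 set \<Rightarrow> int^4 \<Rightarrow> int^4" where
  "shift_vec n A B j = (\<chi> i. j$i + 4 * int n * (of_bool (i \<in> B) - of_bool (i \<in> A)))"

lemma shift_vec_nth: "shift_vec n A B j $ i = j$i + 4 * int n * (of_bool (i \<in> B) - of_bool (i \<in> A))"
  by (simp add: shift_vec_def)

lemma cong_vec_shift_vec: "cong_vec n j (shift_vec n A B j)"
  by (simp add: cong_vec_def shift_vec_nth)

definition shift_choices :: "nat \<Rightarrow> int^4 \<Rightarrow> (4 set \<times> 4 set) set" where
  "shift_choices n j = {(A, B). A \<subseteq> max_coords j \<and> B \<subseteq> min_coords j \<and> card A = card B \<and>
                               (A \<noteq> {} \<longrightarrow> vmax j - vmin j = 4 * int n)}"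

lemma Hstar_cong_quotient:
  assumes n: "n \<ge> 1" and j: "j \<in> Hstar n" and j': "j' \<in> Hstar n" and "cong_vec n j j'"
  obtains v where "\<And>i. j'$i = j$i + 4 * int n * v i" "\<And>i. v i \<in> {-1, 0, 1}"
    "v 1 + v 2 + v 3 + v 4 = 0"
proof -
  define N where "N = 4 * int n"
  have N: "N > 0" using n by (simp add: N_def)
  define v where "v i = (j'$i - j$i) div N" for i
  have jv: "j'$i = j$i + N * v i" for i
    using \<open>cong_vec n j j'\<close> by (simp add: v_def N_def cong_vec_def)
  note sj = HstarD[OF j] and sj' = HstarD[OF j']
  have "N * (v 1 + v 2 + v 3 + v 4) = 0"
    using sj(2) sj'(2) jv[of 1] jv[of 2] jv[of 3] jv[of 4] by (simp add: algebra_simps)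
  hence vs: "v 1 + v 2 + v 3 + v 4 = 0" using N by simp
  have bd: "v i - v l \<le> 2" for i l
  proof (rule ccontr)
    assume "\<not> v i - v l \<le> 2"
    hence "N * 3 \<le> N * (v i - v l)" using N by (intro mult_left_mono) auto
    moreover have "N * (v i - v l) = (j'$i - j'$l) - (j$i - j$l)"
      using jv[of i] jv[of l] by (simp add: algebra_simps)
    moreover have "\<bar>j'$i - j'$l\<bar> \<le> N" "\<bar>j$i - j$l\<bar> \<le> N" using sj(4) sj'(4) by (auto simp: N_def)
    ultimately show False using N by linarith
  qed
  have vr: "v i \<in> {-1, 0, 1}" for i
  proof -
    have "-1 \<le> v i \<and> v i \<le> 1"
      using exhaust_4[of i] vs bd[of i 1] bd[of i 2] bd[of i 3] bd[of i 4]
        bd[of 1 i] bd[of 2 i] bd[of 3 i] bd[of 4 i]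
        bd[of 1 2] bd[of 1 3] bd[of 1 4] bd[of 2 1] bd[of 2 3] bd[of 2 4]
        bd[of 3 1] bd[of 3 2] bd[of 3 4] bd[of 4 1] bd[of 4 2] bd[of 4 3] by auto
    thus ?thesis by auto
  qed
  show thesis using jv vr vs by (intro that[of v]) (auto simp: N_def)
qed

lemma Hstar_cong_extremes:
  assumes j: "j \<in> Hstar n" and j': "j' \<in> Hstar n"
    and up: "j'$i = j$i + 4 * int n" and down: "j'$l = j$l - 4 * int n"
  shows "j$i = vmin j" "j$l = vmax j" "vmax j - vmin j = 4 * int n"
proof -
  have "\<bar>j'$i - j'$l\<bar> \<le> 4 * int n" "\<bar>j$i - j$l\<bar> \<le> 4 * int n"
    using HstarD(4)[OF j] HstarD(4)[OF j'] by auto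
  hence d: "j$l = j$i + 4 * int n" using up down by linarith
  have "j$i \<le> j$x" "j$x \<le> j$l" for x
    using HstarD(4)[OF j, of l x] HstarD(4)[OF j, of x i] d by arith+
  hence "vmin j = j$i" "vmax j = j$l" by (auto intro: vmin_eqI vmax_eqI)
  thus "j$i = vmin j" "j$l = vmax j" "vmax j - vmin j = 4 * int n" using d by simp_all
qed

lemma Hstar_cong_is_shift:
  assumes n: "n \<ge> 1" and j: "j \<in> Hstar n" and j': "j' \<in> Hstar n" and "cong_vec n j j'"
  shows "j' \<in> (\<lambda>(A, B). shift_vec n A B j) ` shift_choices n j"
proof -
  obtain v where jv: "\<And>i. j'$i = j$i + 4 * int n * v i" and vr: "\<And>i. v i \<in> {-1, 0, 1}"
    and vs: "v 1 + v 2 + v 3 + v 4 = 0"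
    using Hstar_cong_quotient[OF assms] by blast
  define A where "A = {i. v i = -1}"
  define B where "B = {i. v i = 1}"
  have vAB: "v i = of_bool (i \<in> B) - of_bool (i \<in> A)" for i
    using vr[of i] by (auto simp: A_def B_def)
  have "int (card B) - int (card A) = (\<Sum>i\<in>UNIV. v i)"
    by (simp add: vAB sum_subtractf)
  hence cAB: "card A = card B" using vs by (simp add: sum_4)
  have extremes: "j$i = vmin j \<and> j$l = vmax j \<and> vmax j - vmin j = 4 * int n"
    if "i \<in> B" "l \<in> A" for i l
    using Hstar_cong_extremes[OF j j', of i l] jv[of i] jv[of l] that by (simp add: A_def B_def)
  have "(A, B) \<in> shift_choices n j"
  proof -
    have "A \<noteq> {} \<longleftrightarrow> B \<noteq> {}" using cAB by auto
    thus ?thesis using extremes cAB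
      unfolding shift_choices_def max_coords_def min_coords_def by blast
  qed
  moreover have "j' = shift_vec n A B j"
    unfolding shift_vec_def vec_eq_iff using jv vAB by simp
  ultimately show ?thesis by force
qed

lemma shift_vec_in_HH:
  assumes "j \<in> HH" "card A = card B"
  shows "shift_vec n A B j \<in> HH"
proof -
  have "(\<Sum>i\<in>UNIV. shift_vec n A B j $ i) =
        (\<Sum>i\<in>UNIV. j$i) + 4 * int n * (\<Sum>i\<in>UNIV. of_bool (i \<in> B) - of_bool (i \<in> A))"
    by (simp add: shift_vec_nth sum.distrib sum_distrib_left)
  also have "(\<Sum>i\<in>UNIV. of_bool (i \<in> B) - of_bool (i \<in> A) :: int) = int (card B) - int (card A)"
    by (simp add: sum_subtractf)
  moreover have "shift_vec n A B j $ i mod 4 = j$i mod 4" for i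
  proof -
    have "shift_vec n A B j $ i = j$i + 4 * (int n * (of_bool (i \<in> B) - of_bool (i \<in> A)))"
      by (simp add: shift_vec_nth)
    thus ?thesis by simp
  qed
  ultimately show ?thesis using assms unfolding HH_def by simp
qed

lemma shift_vec_swap:
  assumes "(A, B) \<in> shift_choices n j" "A \<noteq> {}" "n \<ge> 1"
  shows "shift_vec n A B j $ i = (if i \<in> A then vmin j else if i \<in> B then vmax j else j$i)"
    and "max_coords j \<inter> min_coords j = {}"
proof -
  have rg: "vmax j - vmin j = 4 * int n" using assms by (simp add: shift_choices_def)
  thus disj: "max_coords j \<inter> min_coords j = {}"
    using assms(3) by (intro max_coords_min_coords_disjoint) simp
  show "shift_vec n A B j $ i = (if i \<in> A then vmin j else if i \<in> B then vmax j else j$i)"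
    using assms(1) disj rg unfolding shift_choices_def max_coords_def min_coords_def
    by (auto simp: shift_vec_nth)
qed

lemma shift_vec_in_cong_class:
  assumes n: "n \<ge> 1" and j: "j \<in> Hstar n" and AB: "(A, B) \<in> shift_choices n j"
  shows "shift_vec n A B j \<in> cong_class n j" "cw n (shift_vec n A B j) = cw n j"
proof -
  have AM: "A \<subseteq> max_coords j" and BM: "B \<subseteq> min_coords j" and cAB: "card A = card B"
    using AB by (auto simp: shift_choices_def)
  have "shift_vec n A B j \<in> Hstar n \<and> cw n (shift_vec n A B j) = cw n j"
  proof (cases "A = {}")
    case True
    hence "shift_vec n A B j = j" using cAB by (simp add: shift_vec_def vec_eq_iff)
    thus ?thesis using j by simp
  next
    case False
    define j' where "j' = shift_vec n A B j"
    note j'v = shift_vec_swap(1)[OF AB False n, folded j'_def]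
    note disj = shift_vec_swap(2)[OF AB False n]
    have rg: "vmax j - vmin j = 4 * int n" using AB False by (simp add: shift_choices_def)
    obtain a b where a: "a \<in> A" and b: "b \<in> B" using False cAB by fastforce
    have rng: "vmin j \<le> j'$i \<and> j'$i \<le> vmax j" for i
      using j'v[of i] vmin_le[of j i] vmax_ge[of j i] rg by auto
    have mx: "vmax j' = vmax j"
      by (rule vmax_eqI[of _ _ b]) (use rng j'v[of b] a b AM BM disj in auto)
    have mn: "vmin j' = vmin j"
      by (rule vmin_eqI[of _ _ a]) (use rng j'v[of a] a in auto)
    have "max_coords j' = (max_coords j - A) \<union> B" "min_coords j' = (min_coords j - B) \<union> A"
      using j'v rg n AM BM disj unfolding max_coords_def min_coords_def mx mn by auto
    moreover have "card ((max_coords j - A) \<union> B) = card (max_coords j)"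
      using AM BM disj cAB card_mono[OF _ AM]
      by (subst card_Un_disjoint) (auto simp: card_Diff_subset)
    moreover have "card ((min_coords j - B) \<union> A) = card (min_coords j)"
      using AM BM disj cAB card_mono[OF _ BM]
      by (subst card_Un_disjoint) (auto simp: card_Diff_subset)
    ultimately have "cw n j' = cw n j" unfolding cw_eq mx mn by presburger
    moreover have "j' \<in> Hstar n"
      using shift_vec_in_HH[OF HstarD(1)[OF j] cAB] mx mn rg
      unfolding Hstar_iff_range j'_def by simp
    ultimately show ?thesis unfolding j'_def by blast
  qed
  thus "shift_vec n A B j \<in> cong_class n j" "cw n (shift_vec n A B j) = cw n j"
    by (simp_all add: cong_class_def cong_vec_shift_vec)
qed

lemma cong_class_eq_shifts:
  assumes n: "n \<ge> 1" and j: "j \<in> Hstar n"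
  shows "cong_class n j = (\<lambda>(A, B). shift_vec n A B j) ` shift_choices n j"
  using Hstar_cong_is_shift[OF n j] shift_vec_in_cong_class(1)[OF n j]
  by (auto simp: cong_class_def)

lemma inj_on_shift_vec:
  assumes n: "n \<ge> 1"
  shows "inj_on (\<lambda>(A, B). shift_vec n A B j) (shift_choices n j)"
proof (rule inj_onI, clarify)
  fix A B A' B' assume v: "(A, B) \<in> shift_choices n j" "(A', B') \<in> shift_choices n j"
    and eq: "shift_vec n A B j = shift_vec n A' B' j"
  have disj: "A \<inter> B = {}" if "(A, B) \<in> shift_choices n j" for A B
  proof (cases "A = {}")
    case False
    thus ?thesis using shift_vec_swap(2)[OF that False n] that by (auto simp: shift_choices_def)
  qed simp
  have d: "of_bool (i \<in> B) - of_bool (i \<in> A) = (of_bool (i \<in> B') - of_bool (i \<in> A') :: int)" for i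
    using arg_cong[OF eq, of "\<lambda>x. x $ i"] n by (simp add: shift_vec_nth)
  have "i \<in> A \<longleftrightarrow> i \<in> A'" "i \<in> B \<longleftrightarrow> i \<in> B'" for i
    using d[of i] disj[OF v(1)] disj[OF v(2)] by (auto simp: of_bool_def split: if_splits)
  thus "A = A' \<and> B = B'" by blast
qed

lemma sum_cw_cong_class:
  assumes n: "n \<ge> 1" and j: "j \<in> Hstar n"
  shows "(\<Sum>j'\<in>cong_class n j. cw n j') = 1"
proof -
  have "(\<Sum>j'\<in>cong_class n j. cw n j') = (\<Sum>j'\<in>cong_class n j. cw n j)"
    using shift_vec_in_cong_class(2)[OF n j] by (intro sum.cong) (auto simp: cong_class_eq_shifts[OF n j])
  also have "\<dots> = real (card (shift_choices n j)) * cw n j"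
    by (simp add: cong_class_eq_shifts[OF n j] card_image[OF inj_on_shift_vec[OF n]])
  finally have S: "(\<Sum>j'\<in>cong_class n j. cw n j') = real (card (shift_choices n j)) * cw n j" .
  show ?thesis
  proof (cases "vmax j - vmin j < 4 * int n")
    case True
    hence "shift_choices n j = {({}, {})}" by (auto simp: shift_choices_def)
    thus ?thesis using S True by (simp add: cw_eq)
  next
    case False
    hence "shift_choices n j = {(A, B). A \<subseteq> max_coords j \<and> B \<subseteq> min_coords j \<and> card A = card B}"
      using j by (auto simp: shift_choices_def Hstar_iff_range)
    hence "card (shift_choices n j) = (card (max_coords j) + card (min_coords j)) choose card (max_coords j)"
      by (simp add: card_equal_card_subset_pairs)
    thus ?thesis using S False by (simp add: cw_eq)
  qed
qed

section \<open>A complete residue system modulo 4n\<close>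

lemma ex_lower_subset:
  fixes f :: "'a \<Rightarrow> 'b::linorder"
  assumes "finite I" "k \<le> card I"
  shows "\<exists>S \<subseteq> I. card S = k \<and> (\<forall>i\<in>S. \<forall>l\<in>I - S. f i \<le> f l)"
  using assms(2)
proof (induction k)
  case 0 thus ?case by (intro exI[of _ "{}"]) auto
next
  case (Suc k)
  then obtain S where S: "S \<subseteq> I" "card S = k" "\<forall>i\<in>S. \<forall>l\<in>I - S. f i \<le> f l" by auto
  have fS: "finite S" using S(1) assms(1) finite_subset by blast
  have "I - S \<noteq> {}"
  proof
    assume "I - S = {}"
    hence "card I \<le> card S" using fS by (simp add: card_mono)
    thus False using Suc.prems S(2) by simp
  qed
  hence fin: "finite (f ` (I - S))" and ne: "f ` (I - S) \<noteq> {}" using assms(1) by auto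
  obtain l0 where l0: "l0 \<in> I - S" "f l0 = Min (f ` (I - S))"
    using Min_in[OF fin ne] by auto
  have "f l0 \<le> f l" if "l \<in> I - S" for l
    using l0(2) Min_le[OF fin] that by auto
  thus ?case using S l0(1) fS
    by (intro exI[of _ "insert l0 S"]) auto
qed

lemma lift_lower_subset_diff:
  fixes e :: "'a \<Rightarrow> int"
  assumes "\<And>i. 0 \<le> e i \<and> e i < N" "\<forall>i\<in>S. \<forall>l\<in>-S. e i \<le> e l"
  shows "\<bar>(e i + N * of_bool (i \<in> S)) - (e l + N * of_bool (l \<in> S))\<bar> \<le> N"
  using assms(1)[of i] assms(1)[of l] assms(2)
  by (cases "i \<in> S"; cases "l \<in> S") auto

text \<open>
  Write \<open>x = m + e + 4n q\<close> with \<open>m = min x\<close> and \<open>0 \<le> e < 4n\<close>. Replacing \<open>q\<close> by the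
  constant \<open>d = \<Sum>q div 4\<close> plus \<open>1\<close> on the \<open>\<Sum>q mod 4\<close> coordinates of smallest \<open>e\<close> keeps
  the coordinate sum zero and brings all coordinates within \<open>4n\<close> of each other.
\<close>

lemma ex_Hstar_cong:
  assumes n: "n \<ge> 1" and x: "x \<in> HH"
  shows "\<exists>j\<in>Hstar n. cong_vec n x j"
proof -
  define N where "N = 4 * int n"
  have N: "N > 0" using n by (simp add: N_def)
  define m where "m = vmin x"
  define e where "e i = (x$i - m) mod N" for i
  define q where "q i = (x$i - m) div N" for i
  have xe: "x$i = m + e i + N * q i" for i
    unfolding e_def q_def by simp
  have e0: "0 \<le> e i \<and> e i < N" for i using N by (simp add: e_def)
  define t where "t = (q 1 + q 2 + q 3 + q 4) mod 4"
  define d where "d = (q 1 + q 2 + q 3 + q 4) div 4"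
  have t: "0 \<le> t" "t < 4" "q 1 + q 2 + q 3 + q 4 = 4 * d + t" by (auto simp: t_def d_def)
  obtain S :: "4 set" where S: "card S = nat t" "\<forall>i\<in>S. \<forall>l\<in>-S. e i \<le> e l"
  proof -
    have "nat t \<le> card (UNIV :: 4 set)" using t by simp
    from ex_lower_subset[OF _ this, of e] show thesis
      using that by (auto simp: Compl_eq_Diff_UNIV)
  qed
  define j where "j = (\<chi> i. m + e i + N * d + N * of_bool (i \<in> S))"
  have jv: "j$i = m + e i + N * d + N * of_bool (i \<in> S)" for i by (simp add: j_def)
  have jx: "j$i - x$i = N * (d + of_bool (i \<in> S) - q i)" for i
    unfolding jv xe by (simp add: algebra_simps)
  have "(\<Sum>i\<in>UNIV. of_bool (i \<in> S) :: int) = t" using S(1) t by simp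
  moreover have "(j$1 + j$2 + j$3 + j$4) - (x$1 + x$2 + x$3 + x$4) =
                 N * (4 * d + (\<Sum>i\<in>UNIV. of_bool (i \<in> S)) - (q 1 + q 2 + q 3 + q 4))"
    using jx[of 1] jx[of 2] jx[of 3] jx[of 4] by (simp add: sum_4 algebra_simps)
  ultimately have "j$1 + j$2 + j$3 + j$4 - (x$1 + x$2 + x$3 + x$4) = 0" using t(3) by simp
  moreover have "j$i mod 4 = x$i mod 4" for i
  proof -
    have "j$i = x$i + 4 * (int n * (d + of_bool (i \<in> S) - q i))"
      using jx[of i] by (simp add: N_def)
    thus ?thesis by simp
  qed
  ultimately have "j \<in> HH" using x by (simp add: HH_iff)
  moreover have "\<bar>j$i - j$l\<bar> \<le> N" for i l
  proof -
    have "j$i - j$l = (e i + N * of_bool (i \<in> S)) - (e l + N * of_bool (l \<in> S))"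
      unfolding jv by simp
    thus ?thesis using lift_lower_subset_diff[OF e0 S(2)] by simp
  qed
  ultimately have "j \<in> Hstar n" by (simp add: Hstar_iff N_def)
  moreover have "cong_vec n x j" unfolding cong_vec_def jx N_def by simp
  ultimately show ?thesis by blast
qed

definition hpoint :: "int \<Rightarrow> int \<Rightarrow> int \<Rightarrow> int^4" where
  "hpoint a b c = vector [4*a - c, 4*b - c, 3*c - 4*a - 4*b, -c]"

lemma hpoint_nth [simp]:
  "hpoint a b c $ 1 = 4*a - c" "hpoint a b c $ 2 = 4*b - c"
  "hpoint a b c $ 3 = 3*c - 4*a - 4*b" "hpoint a b c $ 4 = -c"
  by (simp_all add: hpoint_def)

lemma hpoint_in_HH: "hpoint a b c \<in> HH"
proof -
  have eq: "hpoint a b c $ i = -c + 4 * (if i = 1 then a else if i = 2 then b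
                                     else if i = 3 then c - a - b else 0)" for i
    using exhaust_4[of i] by (elim disjE) (simp_all add: algebra_simps)
  have mod4: "(-c + 4 * y) mod 4 = (-c) mod 4" for y :: int by (rule mod_mult_self2)
  have m: "hpoint a b c $ i mod 4 = (-c) mod 4" for i by (simp only: eq mod4)
  have "hpoint a b c $ i mod 4 = hpoint a b c $ 1 mod 4" for i by (simp only: m)
  thus ?thesis unfolding HH_iff by simp
qed

lemma HH_eq_hpoint:
  assumes "j \<in> HH"
  shows "j = hpoint ((j$1 - j$4) div 4) ((j$2 - j$4) div 4) (- j$4)"
proof -
  have "4 * ((j$1 - j$4) div 4) = j$1 - j$4" "4 * ((j$2 - j$4) div 4) = j$2 - j$4"
    using HH_dvd_diff[OF assms] by simp_all
  thus ?thesis using assms unfolding vec_eq_iff forall_4 HH_iff by simp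
qed

lemma hpoint_inj: "hpoint a b c = hpoint a' b' c' \<Longrightarrow> a = a' \<and> b = b' \<and> c = c'"
proof -
  assume e: "hpoint a b c = hpoint a' b' c'"
  have "hpoint a b c $ i = hpoint a' b' c' $ i" for i using e by simp
  from this[of 4] this[of 1] this[of 2] show ?thesis by simp
qed

lemma cong_vec_hpoint:
  assumes "int n dvd (a' - a)" "int n dvd (b' - b)" "(4 * int n) dvd (c' - c)"
  shows "cong_vec n (hpoint a b c) (hpoint a' b' c')"
proof -
  obtain u w z where "a' - a = int n * u" "b' - b = int n * w" "c' - c = 4 * int n * z"
    using assms by (auto elim!: dvdE)
  hence diff: "hpoint a' b' c' $ i - hpoint a b c $ i = 4 * int n *
          (if i = 1 then u - z else if i = 2 then w - z else if i = 3 then 3 * z - u - w else - z)"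
    for i using exhaust_4[of i] by (elim disjE) (simp_all add: algebra_simps)
  show ?thesis unfolding cong_vec_def diff by simp
qed

definition hrep_box :: "nat \<Rightarrow> (int \<times> int \<times> int) set" where
  "hrep_box n = {0..<int n} \<times> {0..<int n} \<times> {0..<4 * int n}"

definition hrep :: "nat \<Rightarrow> int^4 \<Rightarrow> int^4" where
  "hrep n j = hpoint (((j$1 - j$4) div 4) mod int n) (((j$2 - j$4) div 4) mod int n)
                     ((- j$4) mod (4 * int n))"

lemma cong_vec_hrep:
  assumes "j \<in> HH"
  shows "cong_vec n j (hrep n j)"
proof -
  have dvd_mod_diff: "k dvd (x mod k - x)" for x k :: int
    by (metis mod_eq_dvd_iff mod_mod_trivial)
  have "cong_vec n (hpoint ((j$1 - j$4) div 4) ((j$2 - j$4) div 4) (- j$4)) (hrep n j)"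
    unfolding hrep_def by (intro cong_vec_hpoint dvd_mod_diff)
  thus ?thesis using HH_eq_hpoint[OF assms] by simp
qed

lemma hrep_cong:
  assumes j: "j \<in> HH" and j': "j' \<in> HH" and "cong_vec n j j'"
  shows "hrep n j = hrep n j'"
proof -
  have d: "(4 * int n) dvd (j'$i - j$i)" for i using assms(3) by (simp add: cong_vec_def)
  have key: "int n dvd ((j'$i - j'$4) div 4 - (j$i - j$4) div 4)" for i
  proof -
    obtain u u' where u: "j$i - j$4 = 4 * u" and u': "j'$i - j'$4 = 4 * u'"
      using HH_dvd_diff[OF j, of i 4] HH_dvd_diff[OF j', of i 4] by (auto elim!: dvdE)
    have "(4 * int n) dvd ((j'$i - j$i) - (j'$4 - j$4))" using d[of i] d[of 4] by (rule dvd_diff)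
    also have "(j'$i - j$i) - (j'$4 - j$4) = 4 * (u' - u)" using u u' by (simp add: algebra_simps)
    finally have "int n dvd (u' - u)" using dvd_mult_cancel_left[of 4 "int n" "u' - u"] by simp
    thus ?thesis using u u' by simp
  qed
  have "((j'$i - j'$4) div 4) mod int n = ((j$i - j$4) div 4) mod int n" for i
    using key[of i] by (simp add: mod_eq_dvd_iff)
  moreover have "(- j'$4) mod (4 * int n) = (- j$4) mod (4 * int n)"
    using d[of 4] by (simp add: mod_eq_dvd_iff dvd_diff_commute)
  ultimately show ?thesis unfolding hrep_def by simp
qed

lemma finite_hrep_box: "finite (hrep_box n)"
  by (simp add: hrep_box_def)

lemma hrep_hpoint: "(a, b, c) \<in> hrep_box n \<Longrightarrow> hrep n (hpoint a b c) = hpoint a b c"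
  by (simp add: hrep_def hrep_box_def)

lemma hrep_in_hpoint_box:
  assumes "n \<ge> 1"
  shows "hrep n j \<in> (\<lambda>(a, b, c). hpoint a b c) ` hrep_box n"
proof -
  have "(((j$1 - j$4) div 4) mod int n, ((j$2 - j$4) div 4) mod int n, (- j$4) mod (4 * int n))
        \<in> hrep_box n"
    using assms by (simp add: hrep_box_def)
  thus ?thesis unfolding hrep_def by force
qed

lemma hrep_fiber:
  assumes n: "n \<ge> 1" and x: "x \<in> HH" "hrep n x = x"
    and j0: "j0 \<in> Hstar n" "cong_vec n x j0"
  shows "{j \<in> Hstar n. hrep n j = x} = cong_class n j0"
proof (intro set_eqI iffI)
  fix j assume "j \<in> {j \<in> Hstar n. hrep n j = x}"
  hence j: "j \<in> Hstar n" "hrep n j = x" by auto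
  have "cong_vec n j x" using cong_vec_hrep[OF HstarD(1)[OF j(1)], where n=n] j(2) by simp
  hence "cong_vec n j0 j" by (meson cong_vec_sym cong_vec_trans j0(2))
  thus "j \<in> cong_class n j0" using j(1) by (simp add: cong_class_def)
next
  fix j assume "j \<in> cong_class n j0"
  hence j: "j \<in> Hstar n" "cong_vec n j0 j" by (auto simp: cong_class_def)
  have "hrep n x = hrep n j"
    using hrep_cong[OF x(1) HstarD(1)[OF j(1)] cong_vec_trans[OF j0(2) j(2)]] .
  thus "j \<in> {j \<in> Hstar n. hrep n j = x}" using j(1) x(2) by simp
qed

lemma sum_cw_periodic:
  fixes F :: "int^4 \<Rightarrow> complex"
  assumes n: "n \<ge> 1"
    and per: "\<And>j j'. j \<in> HH \<Longrightarrow> j' \<in> HH \<Longrightarrow> cong_vec n j j' \<Longrightarrow> F j = F j'"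
  shows "(\<Sum>j\<in>Hstar n. of_real (cw n j) * F j) = (\<Sum>(a, b, c)\<in>hrep_box n. F (hpoint a b c))"
proof -
  let ?T = "(\<lambda>(a, b, c). hpoint a b c) ` hrep_box n"
  have "(\<Sum>j\<in>Hstar n. of_real (cw n j) * F j) =
        (\<Sum>x\<in>?T. \<Sum>j\<in>{j \<in> Hstar n. hrep n j = x}. of_real (cw n j) * F j)"
    by (rule sum.group[symmetric]) (use finite_Hstar finite_hrep_box hrep_in_hpoint_box[OF n] in auto)
  also have "\<dots> = (\<Sum>x\<in>?T. F x)"
  proof (rule sum.cong[OF refl])
    fix x assume "x \<in> ?T"
    then obtain a b c where abc: "(a, b, c) \<in> hrep_box n" "x = hpoint a b c" by auto
    have xH: "x \<in> HH" using abc by (simp add: hpoint_in_HH)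
    obtain j0 where j0: "j0 \<in> Hstar n" "cong_vec n x j0" using ex_Hstar_cong[OF n xH] by blast
    have "F j = F x" if "j \<in> cong_class n j0" for j
    proof -
      have "j \<in> Hstar n" "cong_vec n x j"
        using that cong_vec_trans[OF j0(2)] by (auto simp: cong_class_def)
      thus ?thesis using per[OF xH HstarD(1)] by metis
    qed
    hence "(\<Sum>j\<in>cong_class n j0. of_real (cw n j) * F j) = (\<Sum>j\<in>cong_class n j0. of_real (cw n j) * F x)"
      by simp
    also have "\<dots> = F x"
      using sum_cw_cong_class[OF n j0(1)] by (simp flip: sum_distrib_right of_real_sum)
    finally show "(\<Sum>j\<in>{j \<in> Hstar n. hrep n j = x}. of_real (cw n j) * F j) = F x"
      using hrep_fiber[OF n xH _ j0] hrep_hpoint[OF abc(1)] abc(2) by simp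
  qed
  also have "\<dots> = (\<Sum>(a, b, c)\<in>hrep_box n. F (hpoint a b c))"
  proof -
    have "inj_on (\<lambda>(a, b, c). hpoint a b c) (hrep_box n)"
      by (rule inj_onI) (auto dest: hpoint_inj)
    thus ?thesis by (simp add: sum.reindex case_prod_unfold)
  qed
  finally show ?thesis .
qed

section \<open>The cubature sum of a character\<close>

definition idot :: "int^4 \<Rightarrow> int^4 \<Rightarrow> int" where
  "idot k j = k$1 * j$1 + k$2 * j$2 + k$3 * j$3 + k$4 * j$4"

definition zeta :: "nat \<Rightarrow> int \<Rightarrow> complex" where
  "zeta n z = exp (\<i> * of_real (pi * real_of_int z / (8 * real n)))"

lemma phi_scaleH: "phi k (scaleH n j) = zeta n (idot k j)"
proof -
  have "hdot k (scaleH n j) = real_of_int (idot k j) / (4 * real n)"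
    unfolding hdot_def scaleH_def idot_def sum_4 by (simp add: add_divide_distrib)
  thus ?thesis unfolding phi_def zeta_def by simp
qed

lemma zeta_add: "zeta n (a + b) = zeta n a * zeta n b"
  unfolding zeta_def by (simp add: distrib_left add_divide_distrib exp_add)

lemma zeta_mult_nat: "zeta n (int m * x) = zeta n x ^ m"
proof (induction m)
  case (Suc m)
  have "int (Suc m) * x = x + int m * x" by (simp add: algebra_simps)
  thus ?case using Suc by (simp add: zeta_add)
qed (simp add: zeta_def)

lemma zeta_period:
  assumes "n \<ge> 1"
  shows "zeta n (16 * int n * M) = 1"
proof -
  have "pi * real_of_int (16 * int n * M) / (8 * real n) = real_of_int M * (pi * 2)"
    using assms by (simp add: field_simps)
  hence "\<i> * of_real (pi * real_of_int (16 * int n * M) / (8 * real n)) = \<i> * (of_int M * (of_real pi * 2))"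
    by (metis of_real_mult of_real_of_int_eq of_real_numeral)
  thus ?thesis unfolding zeta_def by simp
qed

lemma zeta_4_eq_1_iff:
  assumes n: "n \<ge> 1"
  shows "zeta n (4 * x) = 1 \<longleftrightarrow> (4 * int n) dvd x"
proof
  assume "(4 * int n) dvd x"
  then obtain m where "x = 4 * int n * m" by (elim dvdE)
  hence "4 * x = 16 * int n * m" by simp
  thus "zeta n (4 * x) = 1" using zeta_period[OF n, of m] by (simp add: ac_simps)
next
  assume "zeta n (4 * x) = 1"
  then obtain m :: int where "pi * real_of_int (4 * x) / (8 * real n) = of_int (2 * m) * pi"
    unfolding zeta_def exp_eq_1 by auto
  hence "real_of_int x = real_of_int (4 * int n * m)"
    using n by (simp add: field_simps)
  thus "(4 * int n) dvd x" by (simp only: of_int_eq_iff) simp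
qed

lemma phi_scaleH_cong:
  assumes n: "n \<ge> 1" and k: "k \<in> HH" and j: "j \<in> HH" and j': "j' \<in> HH" and "cong_vec n j j'"
  shows "phi k (scaleH n j) = phi k (scaleH n j')"
proof -
  obtain w where w: "\<And>i. j'$i - j$i = 4 * int n * w i"
    using \<open>cong_vec n j j'\<close> unfolding cong_vec_def dvd_def by metis
  have "4 * int n * (w 1 + w 2 + w 3 + w 4) = 0"
    using j j' w[of 1] w[of 2] w[of 3] w[of 4] by (simp add: HH_iff algebra_simps)
  hence ws: "w 1 + w 2 + w 3 + w 4 = 0" using n by simp
  obtain m1 m2 m3 where m: "k$1 - k$4 = 4 * m1" "k$2 - k$4 = 4 * m2" "k$3 - k$4 = 4 * m3"
    using HH_dvd_diff[OF k] by (metis dvdE)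
  \<comment> \<open>the coordinates of \<open>k\<close> are congruent mod 4 and \<open>\<Sum>w = 0\<close>, so \<open>k \<cdot> (j' - j) \<in> 16n\<int>\<close>\<close>
  have "idot k j' - idot k j = 4 * int n * (k$1 * w 1 + k$2 * w 2 + k$3 * w 3 + k$4 * w 4)"
    unfolding idot_def using w[of 1] w[of 2] w[of 3] w[of 4] by (simp add: algebra_simps)
  also have "k$1 * w 1 + k$2 * w 2 + k$3 * w 3 + k$4 * w 4 =
             (k$1 - k$4) * w 1 + (k$2 - k$4) * w 2 + (k$3 - k$4) * w 3 + k$4 * (w 1 + w 2 + w 3 + w 4)"
    by (simp add: algebra_simps)
  finally have "idot k j' = idot k j + 16 * int n * (m1 * w 1 + m2 * w 2 + m3 * w 3)"
    unfolding m ws by (simp add: algebra_simps)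
  thus ?thesis unfolding phi_scaleH using zeta_add zeta_period[OF n] by simp
qed

lemma sum_product_triple:
  fixes f g h :: "'a \<Rightarrow> 'b::comm_semiring_1"
  shows "(\<Sum>(a, b, c)\<in>A \<times> B \<times> C. f a * g b * h c) = sum f A * sum g B * sum h C"
proof -
  have "(\<Sum>a\<in>A. \<Sum>b\<in>B. \<Sum>c\<in>C. f a * g b * h c) = sum f A * sum g B * sum h C"
    by (simp only: sum_distrib_left[symmetric] sum_distrib_right[symmetric])
  thus ?thesis by (simp add: sum.cartesian_product case_prod_beta)
qed

lemma sum_int_interval_nat: "(\<Sum>a\<in>{0..<int m}. f (nat a)) = (\<Sum>a<m. f a)"
proof -
  have "{0..<int m} = int ` {..<m}" using image_int_atLeastLessThan[of 0 m] by (simp add: lessThan_atLeast0)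
  thus ?thesis by (simp add: sum.reindex)
qed

lemma idot_hpoint:
  assumes "k$1 + k$2 + k$3 + k$4 = 0"
  shows "idot k (hpoint a b c) = a * (4 * (k$1 - k$3)) + b * (4 * (k$2 - k$3)) + c * (4 * k$3)"
proof -
  have "idot k (hpoint a b c) - (a * (4 * (k$1 - k$3)) + b * (4 * (k$2 - k$3)) + c * (4 * k$3))
      = - c * (k$1 + k$2 + k$3 + k$4)" unfolding idot_def hpoint_nth by (simp add: algebra_simps)
  thus ?thesis using assms by simp
qed

lemma sum_hrep_box_zeta:
  assumes n: "n \<ge> 1" and k: "k \<in> HH"
  shows "(\<Sum>(a, b, c)\<in>hrep_box n. zeta n (idot k (hpoint a b c))) =
     (if (4 * int n) dvd (k$1 - k$3) \<and> (4 * int n) dvd (k$2 - k$3) \<and> (4 * int n) dvd (k$3)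
      then 4 * of_nat n ^ 3 else 0)"
proof -
  have ks: "k$1 + k$2 + k$3 + k$4 = 0" using k by (simp add: HH_iff)
  define z1 where "z1 = zeta n (4 * (k$1 - k$3))"
  define z2 where "z2 = zeta n (4 * (k$2 - k$3))"
  define z3 where "z3 = zeta n (4 * k$3)"
  obtain u w where u: "k$1 - k$3 = 4 * u" and w: "k$2 - k$3 = 4 * w"
    using HH_dvd_diff[OF k] by (metis dvdE)
  have "z1 ^ n = zeta n (16 * int n * u)" "z2 ^ n = zeta n (16 * int n * w)"
       "z3 ^ (4 * n) = zeta n (16 * int n * k$3)"
    unfolding z1_def z2_def z3_def u w zeta_mult_nat[symmetric] by (simp_all add: ac_simps)
  hence roots: "z1 ^ n = 1" "z2 ^ n = 1" "z3 ^ (4 * n) = 1" by (simp_all add: zeta_period[OF n])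
  have summand: "zeta n (idot k (hpoint a b c)) = z1 ^ nat a * z2 ^ nat b * z3 ^ nat c"
    if "(a, b, c) \<in> hrep_box n" for a b c
  proof -
    have "0 \<le> a" "0 \<le> b" "0 \<le> c" using that by (auto simp: hrep_box_def)
    then obtain a' b' c' :: nat where abc: "a = int a'" "b = int b'" "c = int c'"
      by (metis zero_le_imp_eq_int)
    have "zeta n (idot k (hpoint (int a') (int b') (int c'))) = z1 ^ a' * z2 ^ b' * z3 ^ c'"
      unfolding idot_hpoint[OF ks] zeta_add zeta_mult_nat z1_def z2_def z3_def ..
    thus ?thesis using abc by simp
  qed
  have "(\<Sum>(a, b, c)\<in>hrep_box n. zeta n (idot k (hpoint a b c))) =
        (\<Sum>(a, b, c)\<in>hrep_box n. z1 ^ nat a * z2 ^ nat b * z3 ^ nat c)"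
    using summand by (intro sum.cong) auto
  also have "\<dots> = (\<Sum>a\<in>{0..<int n}. z1 ^ nat a) * (\<Sum>b\<in>{0..<int n}. z2 ^ nat b) *
                   (\<Sum>c\<in>{0..<int (4 * n)}. z3 ^ nat c)"
    unfolding hrep_box_def by (simp add: sum_product_triple)
  also have "\<dots> = (\<Sum>a<n. z1 ^ a) * (\<Sum>b<n. z2 ^ b) * (\<Sum>c<4 * n. z3 ^ c)"
    by (simp only: sum_int_interval_nat)
  also have "\<dots> = (if z1 = 1 then of_nat n else 0) * (if z2 = 1 then of_nat n else 0) *
                   (if z3 = 1 then of_nat (4 * n) else 0)"
    using roots by (simp add: sum_gp_strict)
  finally show ?thesis
    unfolding z1_def z2_def z3_def zeta_4_eq_1_iff[OF n] by (simp add: power3_eq_cube)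
qed

lemma Hstar_dvd_imp_zero:
  assumes n: "n \<ge> 1" and k: "k \<in> Hstar (2 * n - 1)"
    and d: "(4 * int n) dvd (k$1 - k$3)" "(4 * int n) dvd (k$2 - k$3)" "(4 * int n) dvd (k$3)"
  shows "k = 0"
proof -
  define N where "N = 4 * int n"
  have N: "N > 0" using n by (simp add: N_def)
  have bd: "\<bar>k$i - k$l\<bar> \<le> 2 * N - 4" for i l
    using HstarD(4)[OF k, of i l] n by (simp add: N_def of_nat_diff)
  have k4: "k$4 = - k$1 - k$2 - k$3" using HstarD(2)[OF k] by simp
  have "N dvd k$1" "N dvd k$2" "N dvd k$3"
    using dvd_add[OF d(1) d(3)] dvd_add[OF d(2) d(3)] d(3) by (simp_all add: N_def)
  hence "N dvd k$i" for i using exhaust_4[of i] k4 by auto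
  then obtain s where ks: "\<And>i. k$i = N * s i" unfolding dvd_def by metis
  \<comment> \<open>multiples of \<open>N\<close> less than \<open>2N\<close> apart are at most \<open>N\<close> apart\<close>
  have close: "\<bar>s i - s l\<bar> \<le> 1" for i l
  proof (rule ccontr)
    assume "\<not> \<bar>s i - s l\<bar> \<le> 1"
    hence "N * 2 \<le> N * \<bar>s i - s l\<bar>" using N by (intro mult_left_mono) auto
    also have "N * \<bar>s i - s l\<bar> = \<bar>k$i - k$l\<bar>"
      using N unfolding ks by (simp add: abs_mult right_diff_distrib[symmetric])
    finally show False using bd[of i l] by simp
  qed
  have "N * (s 1 + s 2 + s 3 + s 4) = 0" using HstarD(2)[OF k] unfolding ks by (simp add: algebra_simps)
  hence "s 1 + s 2 + s 3 + s 4 = 0" using N by simp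
  hence "s 1 = 0 \<and> s 2 = 0 \<and> s 3 = 0 \<and> s 4 = 0"
    using close[of 1 2] close[of 1 3] close[of 1 4] close[of 2 3] close[of 2 4] close[of 3 4] by arith
  thus ?thesis using ks unfolding vec_eq_iff forall_4 by simp
qed

lemma cubature_sum_phi:
  assumes n: "n \<ge> 1" and k: "k \<in> Hstar (2 * n - 1)"
  shows "(\<Sum>j\<in>Hstar n. of_real (cw n j) * phi k (scaleH n j)) = (if k = 0 then 4 * of_nat n ^ 3 else 0)"
proof -
  have kH: "k \<in> HH" using HstarD(1)[OF k] .
  have "(\<Sum>j\<in>Hstar n. of_real (cw n j) * phi k (scaleH n j)) =
        (\<Sum>(a, b, c)\<in>hrep_box n. zeta n (idot k (hpoint a b c)))"
    unfolding phi_scaleH[symmetric] by (rule sum_cw_periodic[OF n phi_scaleH_cong[OF n kH]])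
  also have "\<dots> = (if k = 0 then 4 * of_nat n ^ 3 else 0)"
    unfolding sum_hrep_box_zeta[OF n kH] using Hstar_dvd_imp_zero[OF n k] by auto
  finally show ?thesis .
qed

section \<open>Integrating a character over \<open>\<Omega>\<^sub>H\<close>\<close>

definition expi_mean :: "real \<Rightarrow> complex" where
  "expi_mean a = (if a = 0 then 1 else (exp (\<i> * of_real a) - 1) / (\<i> * of_real a))"

lemma expi_mean_has_integral:
  "((\<lambda>t. exp (\<i> * of_real (a * t))) has_integral expi_mean a) {0..1}"
proof (cases "a = 0")
  case True
  thus ?thesis using has_integral_const_real[of "1::complex" 0 1] by (simp add: expi_mean_def)
next
  case False
  define F where "F z = exp (\<i> * of_real a * z) / (\<i> * of_real a)" for z :: complex
  have d: "(F has_field_derivative exp (\<i> * of_real a * z)) (at z)" for z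
  proof -
    have "(F has_field_derivative exp (\<i> * of_real a * z) * (\<i> * of_real a) / (\<i> * of_real a)) (at z)"
      unfolding F_def by (auto intro!: derivative_eq_intros)
    thus ?thesis using False by simp
  qed
  have "((\<lambda>t. exp (\<i> * of_real a * of_real t)) has_integral (F (of_real 1) - F (of_real 0))) {0..1}"
  proof (rule fundamental_theorem_of_calculus)
    fix x :: real assume "x \<in> {0..1}"
    show "((\<lambda>t. F (of_real t)) has_vector_derivative exp (\<i> * of_real a * of_real x)) (at x within {0..1})"
      by (rule has_vector_derivative_real_field) (rule d)
  qed simp
  moreover have "F (of_real 1) - F (of_real 0) = expi_mean a" using False
    by (simp add: F_def expi_mean_def diff_divide_distrib)
  ultimately show ?thesis by (simp add: mult.assoc)
qed

definition vec_of_triple :: "real \<times> real \<times> real \<Rightarrow> real^3" where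
  "vec_of_triple p = vector [fst p, fst (snd p), snd (snd p)]"
definition triple_of_vec :: "real^3 \<Rightarrow> real \<times> real \<times> real" where
  "triple_of_vec v = (v$1, v$2, v$3)"

lemma vec_of_triple_nth [simp]:
  "vec_of_triple p $ 1 = fst p" "vec_of_triple p $ 2 = fst (snd p)" "vec_of_triple p $ 3 = snd (snd p)"
  by (simp_all add: vec_of_triple_def)

lemma triple_of_vec_of_triple: "triple_of_vec (vec_of_triple p) = p"
  by (simp add: triple_of_vec_def)

lemma vec_of_triple_of_vec: "vec_of_triple (triple_of_vec v) = v"
  unfolding vec_eq_iff triple_of_vec_def by (simp add: forall_3)

lemma mem_cbox_vec3: "x \<in> cbox (a::real^3) b \<longleftrightarrow>
   a$1 \<le> x$1 \<and> x$1 \<le> b$1 \<and> a$2 \<le> x$2 \<and> x$2 \<le> b$2 \<and> a$3 \<le> x$3 \<and> x$3 \<le> b$3"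
  by (simp add: mem_box_cart forall_3)

lemma mem_cbox_triple: "p \<in> cbox (u::real \<times> real \<times> real) v \<longleftrightarrow>
   fst u \<le> fst p \<and> fst p \<le> fst v \<and> fst (snd u) \<le> fst (snd p) \<and>
   fst (snd p) \<le> fst (snd v) \<and> snd (snd u) \<le> snd (snd p) \<and> snd (snd p) \<le> snd (snd v)"
  by (cases u; cases v; cases p) (simp add: cbox_Pair_eq)

lemma image_vec_of_triple_cbox: "vec_of_triple ` cbox u v = cbox (vec_of_triple u) (vec_of_triple v)"
proof (rule set_eqI)
  fix x :: "real^3"
  have "x \<in> vec_of_triple ` cbox u v \<longleftrightarrow> triple_of_vec x \<in> cbox u v"
    by (metis vec_of_triple_of_vec triple_of_vec_of_triple image_iff)
  also have "\<dots> \<longleftrightarrow> x \<in> cbox (vec_of_triple u) (vec_of_triple v)"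
    unfolding mem_cbox_triple mem_cbox_vec3 by (simp add: triple_of_vec_def)
  finally show "x \<in> vec_of_triple ` cbox u v \<longleftrightarrow> x \<in> cbox (vec_of_triple u) (vec_of_triple v)"
    .
qed

lemma image_triple_of_vec_cbox: "triple_of_vec ` cbox u v = cbox (triple_of_vec u) (triple_of_vec v)"
proof (rule set_eqI)
  fix p :: "real \<times> real \<times> real"
  have "p \<in> triple_of_vec ` cbox u v \<longleftrightarrow> vec_of_triple p \<in> cbox u v"
    by (metis vec_of_triple_of_vec triple_of_vec_of_triple image_iff)
  also have "\<dots> \<longleftrightarrow> p \<in> cbox (triple_of_vec u) (triple_of_vec v)"
    unfolding mem_cbox_triple mem_cbox_vec3 by (simp add: triple_of_vec_def)
  finally show "p \<in> triple_of_vec ` cbox u v \<longleftrightarrow> p \<in> cbox (triple_of_vec u) (triple_of_vec v)"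
    .
qed

lemma content_image_vec_of_triple:
  "Henstock_Kurzweil_Integration.content (vec_of_triple ` cbox u v) =
   Henstock_Kurzweil_Integration.content (cbox u v)"
proof -
  obtain u1 u2 u3 where u: "u = (u1, u2, u3)" by (cases u) auto
  obtain v1 v2 v3 where v: "v = (v1, v2, v3)" by (cases v) auto
  have "Henstock_Kurzweil_Integration.content (cbox (vec_of_triple u) (vec_of_triple v)) =
        (if u1 \<le> v1 \<and> u2 \<le> v2 \<and> u3 \<le> v3 then (v1 - u1) * (v2 - u2) * (v3 - u3) else 0)"
  proof (cases "u1 \<le> v1 \<and> u2 \<le> v2 \<and> u3 \<le> v3")
    case True
    hence "cbox (vec_of_triple u) (vec_of_triple v) \<noteq> {}"
      unfolding interval_eq_empty_cart using u v by (auto simp: forall_3 not_less)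
    moreover have "prod f (UNIV::3 set) = f 1 * f 2 * f 3" for f :: "3 \<Rightarrow> real"
      unfolding UNIV_3 by (simp add: ac_simps)
    ultimately show ?thesis using True unfolding content_cbox_if_cart by (simp add: u v mult.assoc)
  next
    case False
    hence "v1 < u1 \<or> v2 < u2 \<or> v3 < u3" by auto
    hence "\<exists>i. vec_of_triple v $ i < vec_of_triple u $ i"
      using u v by (elim disjE) (rule exI[of _ 1], simp, rule exI[of _ 2], simp, rule exI[of _ 3], simp)
    hence "cbox (vec_of_triple u) (vec_of_triple v) = {}" unfolding interval_eq_empty_cart .
    thus ?thesis using False by (subst if_not_P) simp_all
  qed
  moreover have "Henstock_Kurzweil_Integration.content (cbox u v) =
        (if u1 \<le> v1 \<and> u2 \<le> v2 \<and> u3 \<le> v3 then (v1 - u1) * (v2 - u2) * (v3 - u3) else 0)"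
    unfolding u v content_Pair by (simp add: mult.assoc)
  ultimately show ?thesis by (simp add: image_vec_of_triple_cbox)
qed

lemma linear_vec_of_triple: "linear vec_of_triple"
  by (rule linearI) (simp_all add: vec_eq_iff forall_3)

lemma continuous_vec_of_triple: "continuous (at x) vec_of_triple"
  using linear_vec_of_triple by (simp add: linear_continuous_at linear_linear)

lemma integral_cube_vec_of_triple:
  fixes F :: "real^3 \<Rightarrow> 'a::banach"
  assumes "F integrable_on cbox 0 1"
  shows "integral (cbox (0, 0, 0) (1, 1, 1)) (\<lambda>p. F (vec_of_triple p)) = integral (cbox 0 1) F"
proof -
  have "((\<lambda>p. F (vec_of_triple p)) has_integral (1 / 1) *\<^sub>R integral (cbox 0 1) F)
          (triple_of_vec ` cbox 0 1)"
  proof (rule has_integral_twiddle[where r=1, rotated -1])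
    show "(F has_integral integral (cbox 0 1) F) (cbox 0 1)" using assms by (rule integrable_integral)
    show "\<exists>w z. vec_of_triple ` cbox u v = cbox w z" for u v using image_vec_of_triple_cbox by blast
    show "\<exists>w z. triple_of_vec ` cbox u v = cbox w z" for u v using image_triple_of_vec_cbox by blast
    show "Henstock_Kurzweil_Integration.content (vec_of_triple ` cbox u v) =
          1 * Henstock_Kurzweil_Integration.content (cbox u v)" for u v
      using content_image_vec_of_triple by simp
  qed (simp_all add: triple_of_vec_of_triple vec_of_triple_of_vec continuous_vec_of_triple)
  moreover have "triple_of_vec ` cbox 0 1 = cbox (0, 0, 0) (1, 1, 1)"
    unfolding image_triple_of_vec_cbox by (simp add: triple_of_vec_def)
  ultimately show ?thesis by (simp add: integral_unique)
qed

lemma cube_has_integral_expi: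
  "((\<lambda>u::real^3. exp (\<i> * of_real (a1 * u$1 + a2 * u$2 + a3 * u$3))) has_integral
     (expi_mean a1 * expi_mean a2 * expi_mean a3)) (cbox 0 1)"
proof -
  define F where "F u = exp (\<i> * of_real (a1 * u$1 + a2 * u$2 + a3 * u$3))" for u :: "real^3"
  define G where
    "G x y z = exp (\<i> * of_real (a1 * x)) * (exp (\<i> * of_real (a2 * y)) * exp (\<i> * of_real (a3 * z)))"
    for x y z :: real
  have F_int: "F integrable_on cbox 0 1"
    unfolding F_def by (intro integrable_continuous continuous_intros)
  have "F (vec_of_triple p) = G (fst p) (fst (snd p)) (snd (snd p))" for p
    unfolding F_def G_def by (simp add: exp_add[symmetric] distrib_left add.assoc)
  hence "integral (cbox 0 1) F =
         integral (cbox (0, 0, 0) (1, 1, 1)) (\<lambda>p. G (fst p) (fst (snd p)) (snd (snd p)))"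
    using integral_cube_vec_of_triple[OF F_int] by simp
  also have "\<dots> = integral (cbox 0 1) (\<lambda>x. integral (cbox (0, 0) (1, 1)) (\<lambda>y. G x (fst y) (snd y)))"
    by (subst integral_prod_continuous) (auto simp: G_def intro!: continuous_intros)
  also have "\<dots> =
      integral (cbox 0 1) (\<lambda>x. integral (cbox 0 1) (\<lambda>y. integral (cbox 0 1) (\<lambda>z. G x y z)))"
  proof -
    have contG: "continuous_on S (\<lambda>p. G x (fst p) (snd p))" for S x
      unfolding G_def by (intro continuous_intros)
    have "integral (cbox (0, 0) (1, 1)) (\<lambda>y. G x (fst y) (snd y)) =
           integral (cbox 0 1) (\<lambda>y. integral (cbox 0 1) (\<lambda>z. G x y z))" for x
      using integral_prod_continuous[OF contG] by simp
    thus ?thesis by simp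
  qed
  also have "\<dots> = expi_mean a1 * expi_mean a2 * expi_mean a3"
  proof -
    have i1: "integral {0..1} (\<lambda>t. exp (\<i> * of_real (a * t))) = expi_mean a" for a
      using expi_mean_has_integral by (rule integral_unique)
    show ?thesis
      unfolding G_def box_real integral_mult_left integral_mult_right i1 by (simp add: mult.assoc)
  qed
  finally show ?thesis using integrable_integral[OF F_int] unfolding F_def by metis
qed

text \<open>The change of variables theorem of the library is stated for \<open>real^'n\<close>-valued functions.\<close>

definition vec_of_complex :: "complex \<Rightarrow> real^2" where
  "vec_of_complex z = vector [Re z, Im z]"

definition complex_of_vec :: "real^2 \<Rightarrow> complex" where
  "complex_of_vec v = Complex (v$1) (v$2)"

lemma bounded_linear_vec_of_complex: "bounded_linear vec_of_complex"
proof -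
  have "linear vec_of_complex" by (rule linearI) (simp_all add: vec_of_complex_def vec_eq_iff forall_2)
  thus ?thesis by (simp add: linear_linear)
qed

lemma bounded_linear_complex_of_vec: "bounded_linear complex_of_vec"
proof -
  have "linear complex_of_vec" by (rule linearI) (simp_all add: complex_of_vec_def complex_eq_iff)
  thus ?thesis by (simp add: linear_linear)
qed

lemma has_integral_linear_image_complex:
  fixes L :: "real^'n::{finite,wellorder} \<Rightarrow> real^'n::_" and g :: "real^'n::_ \<Rightarrow> complex"
  assumes L: "linear L" and g: "continuous_on UNIV g"
    and I: "((\<lambda>x. g (L x)) has_integral I) (cbox a b)"
  shows "(g has_integral (of_real \<bar>det (matrix L)\<bar> * I)) (L ` cbox a b)"
proof -
  define V where "V = vec_of_complex \<circ> g"
  have contV: "continuous_on UNIV V"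
    unfolding V_def
    by (rule continuous_on_compose[OF g]) (simp add: linear_continuous_on bounded_linear_vec_of_complex)
  have "continuous_on UNIV L" using L by (simp add: linear_continuous_on linear_linear)
  hence "continuous_on UNIV (V \<circ> L)"
    by (rule continuous_on_compose) (rule continuous_on_subset[OF contV], simp)
  hence "(V \<circ> L) absolutely_integrable_on cbox a b"
    by (intro absolutely_integrable_continuous) (rule continuous_on_subset, auto)
  hence V_abs: "V absolutely_integrable_on L ` cbox a b"
    unfolding absolutely_integrable_on_linear_image[OF L] by simp
  have "integral (cbox a b) (V \<circ> L) = vec_of_complex I"
    using has_integral_linear[OF I bounded_linear_vec_of_complex] by (simp add: V_def o_def integral_unique)
  hence "integral (L ` cbox a b) V = \<bar>det (matrix L)\<bar> *\<^sub>R vec_of_complex I"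
    using integral_change_of_variables_linear[OF L, where f=V and S="cbox a b"] V_abs by simp
  moreover have "(V has_integral integral (L ` cbox a b) V) (L ` cbox a b)"
    using V_abs unfolding absolutely_integrable_on_def by (simp add: has_integral_integral)
  ultimately have "(V has_integral \<bar>det (matrix L)\<bar> *\<^sub>R vec_of_complex I) (L ` cbox a b)" by simp
  from has_integral_linear[OF this bounded_linear_complex_of_vec]
  have "((complex_of_vec \<circ> V) has_integral complex_of_vec (\<bar>det (matrix L)\<bar> *\<^sub>R vec_of_complex I))
          (L ` cbox a b)" .
  moreover have "complex_of_vec \<circ> V = g"
    by (simp add: V_def o_def complex_of_vec_def vec_of_complex_def)
  moreover have "complex_of_vec (\<bar>det (matrix L)\<bar> *\<^sub>R vec_of_complex I) = of_real \<bar>det (matrix L)\<bar> * I"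
    by (simp add: complex_of_vec_def vec_of_complex_def complex_eq_iff)
  ultimately show ?thesis by simp
qed

text \<open>
  \<open>piece_map m\<close> inserts a zero at position \<open>m\<close>, projects orthogonally onto \<open>\<real>\<^sup>4\<^sub>H\<close> and
  takes the coordinates \<open>t\<^sub>1, t\<^sub>2, t\<^sub>3\<close>; it maps the unit cube onto the part of the closure
  of \<open>\<Omega>\<^sub>H\<close> where \<open>t\<^sub>m\<close> is the smallest coordinate.
\<close>

definition face_emb :: "4 \<Rightarrow> real^3 \<Rightarrow> real^4" where
  "face_emb m u = (if m = 1 then vector [0, u$1, u$2, u$3] else if m = 2 then vector [u$1, 0, u$2, u$3]
     else if m = 3 then vector [u$1, u$2, 0, u$3] else vector [u$1, u$2, u$3, 0])"

definition center :: "real^4 \<Rightarrow> real^4" where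
  "center t = (\<chi> i. t$i - (t$1 + t$2 + t$3 + t$4) / 4)"

definition dropH :: "real^4 \<Rightarrow> real^3" where
  "dropH t = vector [t$1, t$2, t$3]"

definition piece_map :: "4 \<Rightarrow> real^3 \<Rightarrow> real^3" where
  "piece_map m u = dropH (center (face_emb m u))"

lemma face_emb_eq:
  "face_emb 1 u = vector [0, u$1, u$2, u$3]" "face_emb 2 u = vector [u$1, 0, u$2, u$3]"
  "face_emb 3 u = vector [u$1, u$2, 0, u$3]" "face_emb 4 u = vector [u$1, u$2, u$3, 0]"
  by (simp_all add: face_emb_def)

lemma linear_piece_map: "linear (piece_map m)"
  using exhaust_4[of m]
  by (intro linearI; elim disjE)
     (simp_all add: piece_map_def face_emb_eq dropH_def center_def vec_eq_iff forall_3 field_simps)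

lemma det_piece_map: "\<bar>det (matrix (piece_map m))\<bar> = 1/4"
  using exhaust_4[of m]
  by (elim disjE) (simp_all add: det_3 matrix_def piece_map_def face_emb_eq dropH_def center_def axis_def)

lemma liftH_nth [simp]:
  "liftH x $ 1 = x$1" "liftH x $ 2 = x$2" "liftH x $ 3 = x$3" "liftH x $ 4 = -(x$1 + x$2 + x$3)"
  by (simp_all add: liftH_def)

lemma hdot_4: "hdot k t = of_int (k$1) * t$1 + of_int (k$2) * t$2 + of_int (k$3) * t$3 + of_int (k$4) * t$4"
  unfolding hdot_def sum_4 by simp

lemma continuous_on_phi_liftH: "continuous_on S (\<lambda>x. phi k (liftH x))"
  unfolding phi_def hdot_4 liftH_nth by (intro continuous_intros)

lemma liftH_dropH: "t$1 + t$2 + t$3 + t$4 = 0 \<Longrightarrow> liftH (dropH t) = t"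
  unfolding vec_eq_iff forall_4 by (simp add: dropH_def)

lemma dropH_liftH: "dropH (liftH x) = x"
  unfolding dropH_def vec_eq_iff forall_3 by simp

lemma center_nth: "center t $ i = t$i - (t$1 + t$2 + t$3 + t$4) / 4"
  by (simp add: center_def)

lemma center_sum: "center t $ 1 + center t $ 2 + center t $ 3 + center t $ 4 = 0"
  unfolding center_nth by (simp add: field_simps)

lemma center_shift: "center (\<chi> i. t$i - c) = center t"
  unfolding center_def vec_eq_iff by (simp add: field_simps)

lemma center_id: "t$1 + t$2 + t$3 + t$4 = 0 \<Longrightarrow> center t = t"
  unfolding center_def vec_eq_iff by simp

lemma liftH_piece_map: "liftH (piece_map m u) = center (face_emb m u)"
  unfolding piece_map_def by (rule liftH_dropH[OF center_sum])

lemma hdot_center: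
  assumes "k$1 + k$2 + k$3 + k$4 = 0"
  shows "hdot k (center t) = hdot k t"
proof -
  have "hdot k (center t) = hdot k t - (t$1 + t$2 + t$3 + t$4) / 4 * of_int (k$1 + k$2 + k$3 + k$4)"
    unfolding hdot_4 center_nth by (simp add: field_simps)
  thus ?thesis using assms by simp
qed

definition freq :: "4 \<Rightarrow> int^4 \<Rightarrow> real^3" where
  "freq m k = (if m = 1 then vector [pi/2 * k$2, pi/2 * k$3, pi/2 * k$4]
    else if m = 2 then vector [pi/2 * k$1, pi/2 * k$3, pi/2 * k$4]
    else if m = 3 then vector [pi/2 * k$1, pi/2 * k$2, pi/2 * k$4]
    else vector [pi/2 * k$1, pi/2 * k$2, pi/2 * k$3])"

lemma freq_nth:
  "freq 1 k $ 1 = pi/2 * k$2" "freq 1 k $ 2 = pi/2 * k$3" "freq 1 k $ 3 = pi/2 * k$4"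
  "freq 2 k $ 1 = pi/2 * k$1" "freq 2 k $ 2 = pi/2 * k$3" "freq 2 k $ 3 = pi/2 * k$4"
  "freq 3 k $ 1 = pi/2 * k$1" "freq 3 k $ 2 = pi/2 * k$2" "freq 3 k $ 3 = pi/2 * k$4"
  "freq 4 k $ 1 = pi/2 * k$1" "freq 4 k $ 2 = pi/2 * k$2" "freq 4 k $ 3 = pi/2 * k$3"
  by (simp_all add: freq_def)

lemma hdot_face_emb:
  "pi / 2 * hdot k (face_emb m u) = freq m k $ 1 * u$1 + freq m k $ 2 * u$2 + freq m k $ 3 * u$3"
  using exhaust_4[of m] by (elim disjE) (simp_all add: hdot_4 face_emb_eq freq_def algebra_simps)

lemma piece_has_integral:
  assumes k: "k \<in> HH"
  shows "((\<lambda>x. phi k (liftH x)) has_integral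
           (of_real (1/4) * (expi_mean (freq m k $ 1) * expi_mean (freq m k $ 2) * expi_mean (freq m k $ 3))))
         (piece_map m ` cbox 0 1)"
proof -
  have ks: "k$1 + k$2 + k$3 + k$4 = 0" using k by (simp add: HH_iff)
  have "phi k (liftH (piece_map m u)) =
        exp (\<i> * of_real (freq m k $ 1 * u$1 + freq m k $ 2 * u$2 + freq m k $ 3 * u$3))" for u
    unfolding liftH_piece_map phi_def hdot_center[OF ks] hdot_face_emb[symmetric] ..
  hence "((\<lambda>u. phi k (liftH (piece_map m u))) has_integral
           (expi_mean (freq m k $ 1) * expi_mean (freq m k $ 2) * expi_mean (freq m k $ 3))) (cbox 0 1)"
    using cube_has_integral_expi by simp
  from has_integral_linear_image_complex[OF linear_piece_map continuous_on_phi_liftH this]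
  show ?thesis unfolding det_piece_map .
qed

definition face_proj :: "4 \<Rightarrow> real^4 \<Rightarrow> real^3" where
  "face_proj m w = (if m = 1 then vector [w$2, w$3, w$4] else if m = 2 then vector [w$1, w$3, w$4]
     else if m = 3 then vector [w$1, w$2, w$4] else vector [w$1, w$2, w$3])"

lemma face_emb_nth_self: "face_emb m u $ m = 0"
  using exhaust_4[of m] by (elim disjE) (simp_all add: face_emb_eq)

lemma face_emb_bounds:
  assumes "u \<in> cbox 0 1"
  shows "0 \<le> face_emb m u $ i \<and> face_emb m u $ i \<le> 1"
proof -
  have u: "0 \<le> u$1" "u$1 \<le> 1" "0 \<le> u$2" "u$2 \<le> 1" "0 \<le> u$3" "u$3 \<le> 1"
    using assms by (auto simp: mem_box_cart)
  show ?thesis using exhaust_4[of m] exhaust_4[of i] u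
    by (elim disjE) (simp_all add: face_emb_eq)
qed

lemma face_emb_face_proj: "w $ m = 0 \<Longrightarrow> face_emb m (face_proj m w) = w"
  using exhaust_4[of m]
  by (elim disjE) (simp_all add: face_emb_eq face_proj_def vec_eq_iff forall_4)

lemma face_proj_in_cube:
  assumes "\<And>i. 0 \<le> w$i \<and> w$i \<le> 1"
  shows "face_proj m w \<in> cbox 0 1"
  using exhaust_4[of m] assms
  by (elim disjE) (simp_all add: face_proj_def mem_box_cart forall_3)

lemma piece_map_image_iff:
  "x \<in> piece_map m ` cbox 0 1 \<longleftrightarrow> (\<forall>i. liftH x $ m \<le> liftH x $ i \<and> liftH x $ i \<le> liftH x $ m + 1)"
proof
  assume "x \<in> piece_map m ` cbox 0 1"
  then obtain u where u: "u \<in> cbox 0 1" "x = piece_map m u" by auto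
  have t: "liftH x = center (face_emb m u)" using u(2) liftH_piece_map by simp
  have d: "center w $ i - center w $ m = w$i - w$m" for w i by (simp add: center_nth)
  show "\<forall>i. liftH x $ m \<le> liftH x $ i \<and> liftH x $ i \<le> liftH x $ m + 1"
  proof
    fix i
    have "liftH x $ i - liftH x $ m = face_emb m u $ i" unfolding t d face_emb_nth_self by simp
    thus "liftH x $ m \<le> liftH x $ i \<and> liftH x $ i \<le> liftH x $ m + 1" using face_emb_bounds[OF u(1), of m i] by simp
  qed
next
  assume a: "\<forall>i. liftH x $ m \<le> liftH x $ i \<and> liftH x $ i \<le> liftH x $ m + 1"
  define t where "t = liftH x"
  define w where "w = (\<chi> i. t$i - t$m)"
  have w0: "w$m = 0" by (simp add: w_def)
  have wb: "0 \<le> w$i \<and> w$i \<le> 1" for i using a[rule_format, of i] by (simp add: w_def t_def)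
  have "piece_map m (face_proj m w) = dropH (center w)" unfolding piece_map_def face_emb_face_proj[OF w0] ..
  also have "center w = center t" unfolding w_def by (rule center_shift)
  also have "center t = t" unfolding t_def by (rule center_id) simp
  also have "dropH t = x" unfolding t_def by (rule dropH_liftH)
  finally show "x \<in> piece_map m ` cbox 0 1" using face_proj_in_cube[OF wb] by (metis image_eqI)
qed

definition Omega_closed :: "(real^3) set" where
  "Omega_closed = {x. \<forall>i j. \<bar>liftH x $ i - liftH x $ j\<bar> \<le> 1}"

lemma Omega_closed_eq_pieces: "Omega_closed = (\<Union>m. piece_map m ` cbox 0 1)"
proof
  show "Omega_closed \<subseteq> (\<Union>m. piece_map m ` cbox 0 1)"
  proof
    fix x assume x: "x \<in> Omega_closed"
    obtain m where "liftH x $ m = vmin (liftH x)" using vmin_attained by metis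
    hence m: "\<forall>i. liftH x $ m \<le> liftH x $ i" by (metis vmin_le)
    have "\<forall>i. liftH x $ m \<le> liftH x $ i \<and> liftH x $ i \<le> liftH x $ m + 1"
    proof
      fix i
      have "\<bar>liftH x $ i - liftH x $ m\<bar> \<le> 1" using x by (simp add: Omega_closed_def)
      thus "liftH x $ m \<le> liftH x $ i \<and> liftH x $ i \<le> liftH x $ m + 1" using m by auto
    qed
    hence "x \<in> piece_map m ` cbox 0 1" by (rule iffD2[OF piece_map_image_iff])
    thus "x \<in> (\<Union>m. piece_map m ` cbox 0 1)" by (rule UN_I[OF UNIV_I])
  qed
next
  show "(\<Union>m. piece_map m ` cbox 0 1) \<subseteq> Omega_closed"
  proof
    fix x assume "x \<in> (\<Union>m. piece_map m ` cbox 0 1)"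
    then obtain m where "x \<in> piece_map m ` cbox 0 1" by blast
    hence a: "\<forall>i. liftH x $ m \<le> liftH x $ i \<and> liftH x $ i \<le> liftH x $ m + 1" by (rule iffD1[OF piece_map_image_iff])
    have "\<bar>liftH x $ i - liftH x $ j\<bar> \<le> 1" for i j
      using a[rule_format, of i] a[rule_format, of j] by auto
    thus "x \<in> Omega_closed" by (simp add: Omega_closed_def)
  qed
qed

definition coord_form :: "4 \<Rightarrow> real^3" where
  "coord_form i = (if i = 1 then vector [1,0,0] else if i = 2 then vector [0,1,0]
     else if i = 3 then vector [0,0,1] else vector [-1,-1,-1])"

lemma liftH_nth_inner: "liftH x $ i = coord_form i \<bullet> x"
  using exhaust_4[of i] by (elim disjE) (simp_all add: coord_form_def inner_vec_def sum_3)

lemma coord_form_neq: "i \<noteq> j \<Longrightarrow> coord_form i - coord_form j \<noteq> 0"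
  using exhaust_4[of i] exhaust_4[of j]
  by (elim disjE) (simp_all add: coord_form_def vec_eq_iff forall_3)

lemma negligible_coord_diff_eq: "i \<noteq> j \<Longrightarrow> negligible {x. liftH x $ i - liftH x $ j = d}"
proof -
  assume "i \<noteq> j"
  have "{x. liftH x $ i - liftH x $ j = d} = {x. (coord_form i - coord_form j) \<bullet> x = d}"
    by (simp add: liftH_nth_inner inner_diff_left)
  moreover have "negligible {x. (coord_form i - coord_form j) \<bullet> x = d}"
    by (rule negligible_hyperplane) (use coord_form_neq[OF \<open>i \<noteq> j\<close>] in simp)
  ultimately show ?thesis by simp
qed

lemma negligible_piece_inter:
  assumes "m \<noteq> m'"
  shows "negligible (piece_map m ` cbox 0 1 \<inter> piece_map m' ` cbox 0 1)"
proof (rule negligible_subset[OF negligible_coord_diff_eq[OF assms, of 0]])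
  show "piece_map m ` cbox 0 1 \<inter> piece_map m' ` cbox 0 1 \<subseteq> {x. liftH x $ m - liftH x $ m' = 0}"
  proof
    fix x assume "x \<in> piece_map m ` cbox 0 1 \<inter> piece_map m' ` cbox 0 1"
    hence "liftH x $ m \<le> liftH x $ m'" "liftH x $ m' \<le> liftH x $ m"
      using piece_map_image_iff[of x m] piece_map_image_iff[of x m'] by auto
    thus "x \<in> {x. liftH x $ m - liftH x $ m' = 0}" by simp
  qed
qed

lemma domain_subset_Omega_closed: "{x. liftH x \<in> OmegaH} \<subseteq> Omega_closed"
proof
  fix x assume "x \<in> {x. liftH x \<in> OmegaH}"
  hence a: "-1 < liftH x $ i - liftH x $ j \<and> liftH x $ i - liftH x $ j \<le> 1" if "i < j" for i j
    using that by (simp add: OmegaH_def)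
  have "\<bar>liftH x $ i - liftH x $ j\<bar> \<le> 1" for i j
    using a[of i j] a[of j i] by (cases i j rule: linorder_cases) auto
  thus "x \<in> Omega_closed" by (simp add: Omega_closed_def)
qed

lemma negligible_Omega_closed_minus_domain: "negligible (Omega_closed - {x. liftH x \<in> OmegaH})"
proof (rule negligible_subset)
  let ?U = "\<Union>(i, j)\<in>{(i, j). i \<noteq> j}. {x. liftH x $ i - liftH x $ j = -1}"
  show "negligible ?U"
    by (intro negligible_Union) (auto intro: negligible_coord_diff_eq)
  show "Omega_closed - {x. liftH x \<in> OmegaH} \<subseteq> ?U"
  proof
    fix x assume x: "x \<in> Omega_closed - {x. liftH x \<in> OmegaH}"
    then obtain i j where "i < j" "\<not> (-1 < liftH x $ i - liftH x $ j \<and> liftH x $ i - liftH x $ j \<le> 1)"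
      by (auto simp: OmegaH_def sum_4)
    moreover have "\<bar>liftH x $ i - liftH x $ j\<bar> \<le> 1" using x by (simp add: Omega_closed_def)
    ultimately have "i \<noteq> j" "liftH x $ i - liftH x $ j = -1" by auto
    thus "x \<in> ?U" by blast
  qed
qed

lemma phi_has_integral_Omega_closed:
  assumes "k \<in> HH"
  shows "((\<lambda>x. phi k (liftH x)) has_integral
           (\<Sum>m\<in>UNIV. of_real (1/4) * (expi_mean (freq m k $ 1) * expi_mean (freq m k $ 2) *
                                          expi_mean (freq m k $ 3)))) Omega_closed"
  unfolding Omega_closed_eq_pieces
  by (intro has_integral_UN piece_has_integral[OF assms])
     (auto simp: pairwise_def negligible_piece_inter)

lemma exp_half_pi_shift:
  assumes "k' = k + 4 * q"
  shows "exp (\<i> * of_real (pi / 2 * of_int k')) = exp (\<i> * of_real (pi / 2 * of_int k))"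
proof -
  have "\<i> * of_real (pi / 2 * of_int k') = \<i> * of_real (pi / 2 * of_int k) + \<i> * (of_int q * (of_real pi * 2))"
    using assms by (simp add: algebra_simps)
  hence "exp (\<i> * of_real (pi / 2 * of_int k')) =
         exp (\<i> * of_real (pi / 2 * of_int k)) * exp (\<i> * (of_int q * (of_real pi * 2)))"
    by (simp only: exp_add)
  thus ?thesis by (simp only: exp_2pi_1_int mult_1_right)
qed

lemma expi_mean_half_pi_dvd_4:
  assumes "4 dvd k"
  shows "expi_mean (pi / 2 * of_int k) = (if k = 0 then 1 else 0)"
proof -
  obtain r where "k = 0 + 4 * r" using assms by (auto elim: dvdE)
  from exp_half_pi_shift[OF this] show ?thesis by (simp add: expi_mean_def)
qed

lemma expi_mean_half_pi_cong:
  assumes "4 dvd (k' - k)" "k \<noteq> 0" "k' \<noteq> 0"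
  shows "of_int k' * expi_mean (pi / 2 * of_int k') = of_int k * expi_mean (pi / 2 * of_int k)"
proof -
  obtain q where "k' = k + 4 * q" using assms(1) by (auto elim!: dvdE simp: algebra_simps)
  from exp_half_pi_shift[OF this] show ?thesis using assms(2,3) by (simp add: expi_mean_def)
qed

lemma expi_mean_sum_HH:
  assumes k: "k \<in> HH"
  shows "(\<Sum>m\<in>UNIV. of_real (1/4) * (expi_mean (freq m k $ 1) * expi_mean (freq m k $ 2) *
                                     expi_mean (freq m k $ 3))) = (if k = 0 then 1 else (0::complex))"
proof -
  define E where "E i = expi_mean (pi / 2 * of_int (k$i))" for i
  have ks: "k$1 + k$2 + k$3 + k$4 = 0" using k by (simp add: HH_iff)
  have kz: "k = 0 \<longleftrightarrow> k$1 = 0 \<and> k$2 = 0 \<and> k$3 = 0 \<and> k$4 = 0"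
    unfolding vec_eq_iff forall_4 by simp
  have "(\<Sum>m\<in>UNIV. of_real (1/4) * (expi_mean (freq m k $ 1) * expi_mean (freq m k $ 2) *
                                     expi_mean (freq m k $ 3))) =
        (E 2 * E 3 * E 4 + E 1 * E 3 * E 4 + E 1 * E 2 * E 4 + E 1 * E 2 * E 3) / 4"
    by (simp add: sum_4 freq_nth E_def field_simps)
  also have "\<dots> = (if k = 0 then 1 else 0)"
  proof (cases "4 dvd k$1")
    case True
    hence "4 dvd k$i" for i using HH_dvd_diff[OF k, of i 1] by (metis dvd_diff_commute dvd_add diff_add_cancel)
    hence "E i = (if k$i = 0 then 1 else 0)" for i unfolding E_def by (rule expi_mean_half_pi_dvd_4)
    thus ?thesis unfolding kz using ks
      by (cases "k$1 = 0"; cases "k$2 = 0"; cases "k$3 = 0"; cases "k$4 = 0") simp_all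
  next
    case False
    \<comment> \<open>then all \<open>k\<^sub>i\<close> are nonzero and \<open>k\<^sub>i E\<^sub>i\<close> does not depend on \<open>i\<close>\<close>
    have nz: "k$i \<noteq> 0" for i using HH_dvd_diff[OF k, of 1 i] False by auto
    define B where "B = of_int (k$1) * E 1"
    have "E i = B / of_int (k$i)" for i
      using expi_mean_half_pi_cong[OF HH_dvd_diff[OF k, of i 1] nz[of 1] nz[of i]] nz[of i]
      by (simp add: B_def E_def field_simps)
    hence "E 2 * E 3 * E 4 + E 1 * E 3 * E 4 + E 1 * E 2 * E 4 + E 1 * E 2 * E 3
       = B^3 * of_int (k$1 + k$2 + k$3 + k$4) / (of_int (k$1) * of_int (k$2) * of_int (k$3) * of_int (k$4))"
      using nz[of 1] nz[of 2] nz[of 3] nz[of 4] by (simp add: field_simps power3_eq_cube)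
    thus ?thesis using ks nz[of 1] kz by simp
  qed
  finally show ?thesis .
qed

lemma phi_has_integral_domain:
  assumes "k \<in> HH"
  shows "((\<lambda>x. phi k (liftH x)) has_integral (if k = 0 then 1 else 0)) {x. liftH x \<in> OmegaH}"
proof (rule iffD1[OF has_integral_spike_set_eq phi_has_integral_Omega_closed[OF assms, unfolded expi_mean_sum_HH[OF assms]]])
  show "negligible {x \<in> Omega_closed - {x. liftH x \<in> OmegaH}. phi k (liftH x) \<noteq> 0}"
    by (rule negligible_subset[OF negligible_Omega_closed_minus_domain]) blast
  have "{x \<in> {x. liftH x \<in> OmegaH} - Omega_closed. phi k (liftH x) \<noteq> 0} = {}"
    using domain_subset_Omega_closed by blast
  thus "negligible {x \<in> {x. liftH x \<in> OmegaH} - Omega_closed. phi k (liftH x) \<noteq> 0}"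
    by (simp only: negligible_empty)
qed

theorem theorem3p16:
  fixes n :: nat and f :: "real^4 \<Rightarrow> complex"
  assumes "n \<ge> 1" and "f \<in> Tm (2 * n - 1)"
  shows "intH f / 2 =
    (\<Sum>j\<in>Hstar n. complex_of_real (cw n j) * f (scaleH n j)) / (4 * of_nat n ^ 3)"
proof -
  let ?K = "Hstar (2 * n - 1)"
  obtain a where f: "f = (\<lambda>t. \<Sum>k\<in>?K. a k * phi k t)" using assms(2) unfolding Tm_def by blast
  have zero: "0 \<in> ?K" by (simp add: Hstar_iff HH_iff)
  have "((\<lambda>x. \<Sum>k\<in>?K. a k * phi k (liftH x)) has_integral (\<Sum>k\<in>?K. a k * (if k = 0 then 1 else 0)))
          {x. liftH x \<in> OmegaH}"
    using HstarD(1) by (intro has_integral_sum finite_Hstar has_integral_mult_right phi_has_integral_domain)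
  moreover have "(\<Sum>k\<in>?K. a k * (if k = 0 then 1 else 0)) = (\<Sum>k\<in>?K. if k = 0 then a k else 0)"
    by (intro sum.cong) auto
  ultimately have "((\<lambda>x. f (liftH x)) has_integral a 0) {x. liftH x \<in> OmegaH}"
    using zero unfolding f by (simp add: sum.delta finite_Hstar)
  hence lhs: "intH f / 2 = a 0" unfolding intH_def by (simp add: integral_unique)
  have "(\<Sum>j\<in>Hstar n. complex_of_real (cw n j) * f (scaleH n j)) =
                 (\<Sum>k\<in>?K. a k * (\<Sum>j\<in>Hstar n. complex_of_real (cw n j) * phi k (scaleH n j)))"
    unfolding f by (simp add: sum_distrib_left mult.left_commute sum.swap[of _ "Hstar n"])
  also have "\<dots> = a 0 * (4 * of_nat n ^ 3)"
    using zero by (simp add: cubature_sum_phi[OF assms(1)] if_distrib sum.delta finite_Hstar cong: if_cong)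
  finally show ?thesis using lhs assms(1) by simp
qed

end
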